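(* Let $M,K$ be real anti-symmetric $m\times m$ matrices, $S:\mathbb R^m\to\mathbb R$ smooth, $A$ a real symmetric and $B$ a real anti-symmetric $m\times m$ matrix. Let $\mathbf z_h$ be a solution of the semi-discrete DG scheme described in the context. Suppose $d\mathbf z_h$ and $d\breve{\mathbf z}_h$ are continuously differentiable functions of $t$ with values in $\mathbf V_h$, each satisfying, for every $j$ and every $\boldsymbol\varphi\in\mathbf V_h$, the variational equation $$\int_{I_j}M\,\partial_t(d\mathbf z_h)\cdot\boldsymbol\varphi\,dx-\int_{I_j}K\,d\mathbf z_h\cdot\partial_x\boldsymbol\varphi\,dx+\big(\widehat{K d\mathbf z_h}\cdot\boldsymbol\varphi^-\big)_{j+\frac12}-\big(\widehat{K d\mathbf z_h}\cdot\boldsymbol\varphi^+\big)_{j-\frac12}=\int_{I_j}\nabla_{\mathbf z\mathbf z}S(\mathbf z_h)\,d\mathbf z_h\cdot\boldsymbol\varphi\,dx,$$ where $\widehat{K d\mathbf z_h}=K\{d\mathbf z_h\}+A[d\mathbf z_h]+B\,\partial_t[d\mathbf z_h]$ at each interface. Define $$\omega_{h,j}=\int_{I_j}M\,d\mathbf z_h\cdot d\breve{\mathbf z}_h\,dx+\tfrac12\big(B[d\breve{\mathbf z}_h]\cdot[d\mathbf z_h]\big)_{j+\frac12}+\tfrac12\big(B[d\breve{\mathbf z}_h]\cdot[d\mathbf z_h]\big)_{j-\frac12}$$ and, at each interface, $\mathcal F(d\mathbf z_h,d\breve{\mathbf z}_h)=\{K\,d\mathbf z_h\cdot d\breve{\mathbf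 z}_h\}-\widehat{K d\mathbf z_h}\cdot\{d\breve{\mathbf z}_h\}+\widehat{K d\breve{\mathbf z}_h}\cdot\{d\mathbf z_h\}$. Then for every $j$, $$\frac{d}{dt}\omega_{h,j}-\mathcal F(d\mathbf z_h,d\breve{\mathbf z}_h)_{j+\frac12}+\mathcal F(d\mathbf z_h,d\breve{\mathbf z}_h)_{j-\frac12}=0.$$
   Context: Mesh and spaces: a one-dimensional domain $\Omega$ is partitioned into cells $I_j=[x_{j-1/2},x_{j+1/2}]$, $j=1,\dots,N$, with periodic boundary conditions (interface indices taken modulo $N$). For fixed $k\ge 0$, $V_h=\{v\in L^2(\Omega): v|_{I_j}\text{ is a polynomial of degree}\le k\ \forall j\}$ and $\mathbf V_h=(V_h)^m$. For $\mathbf v\in\mathbf V_h$, $\mathbf v^+_{j+1/2}$ and $\mathbf v^-_{j+1/2}$ are its right and left limits at $x_{j+1/2}$; $\{\mathbf v\}=\frac12(\mathbf v^++\mathbf v^-)$, $[\mathbf v]=\mathbf v^+-\mathbf v^-$, and $\{K\mathbf v\cdot\mathbf w\}=\frac12(K\mathbf v^+\cdot\mathbf w^++K\mathbf v^-\cdot\mathbf w^-)$. Subscript $j\pm\frac12$ means evaluation at $x_{j\pm1/2}$. The semi-discrete DG scheme: find $\mathbf z_h(t)\in\mathbf V_h$, continuously differentiable in $t$, such that for all $j$ and all $\boldsymbol\varphi\in\mathbf V_h$, $$\int_{I_j}M\partial_t\mathbf z_h\cdot\boldsymbol\varphi\,dx-\int_{I_j}K\mathbf z_h\cdot\partial_x\boldsymbol\varphi\,dx+\big(\widehat{K\mathbf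 z_h}\cdot\boldsymbol\varphi^-\big)_{j+\frac12}-\big(\widehat{K\mathbf z_h}\cdot\boldsymbol\varphi^+\big)_{j-\frac12}=\int_{I_j}\nabla_{\mathbf z}S(\mathbf z_h)\cdot\boldsymbol\varphi\,dx,$$ with numerical flux $\widehat{K\mathbf z_h}=K\{\mathbf z_h\}+A[\mathbf z_h]+B\,\partial_t[\mathbf z_h]$ at each interface. This is a discretization of the multi-symplectic Hamiltonian PDE $M\mathbf z_t+K\mathbf z_x=\nabla_{\mathbf z}S(\mathbf z)$. $\nabla_{\mathbf z\mathbf z}S$ is the Hessian of $S$. *)

theory Defs
  imports "HOL-Analysis.Analysis"
begin

definition pdiff :: "(real^'m \<Rightarrow> real) \<Rightarrow> 'm \<Rightarrow> real^'m \<Rightarrow> real" where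
  "pdiff f i z = deriv (\<lambda>s. f (z + s *\<^sub>R axis i 1)) 0"

fun iter_pdiff :: "(real^'m \<Rightarrow> real) \<Rightarrow> 'm list \<Rightarrow> real^'m \<Rightarrow> real" where
  "iter_pdiff f [] = f"
| "iter_pdiff f (i # is) = pdiff (iter_pdiff f is) i"

definition smooth_fun :: "(real^'m \<Rightarrow> real) \<Rightarrow> bool" where
  "smooth_fun f \<longleftrightarrow> (\<forall>is z. iter_pdiff f is differentiable (at z))"

definition grad :: "(real^'m \<Rightarrow> real) \<Rightarrow> real^'m \<Rightarrow> real^'m" where
  "grad f z = (\<chi> i. pdiff f i z)"

definition hess :: "(real^'m \<Rightarrow> real) \<Rightarrow> real^'m \<Rightarrow> real^'m^'m" where
  "hess f z = (\<chi> i j. pdiff (pdiff f i) j z)"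

text \<open>Cells are indexed 0..N-1, cell j is [xs j, xs (Suc j)].  An element of V_h is given
  by coefficients a j n (cell j, monomial x^n, n \<le> k).  Interface r (r < N) is the
  right end of cell r, i.e. x_{r+1/2}; by periodicity its right neighbour is cell (Suc r mod N).\<close>

definition pv :: "nat \<Rightarrow> (nat \<Rightarrow> real^'m) \<Rightarrow> real \<Rightarrow> real^'m" where
  "pv k a x = (\<Sum>n\<le>k. (x ^ n) *\<^sub>R a n)"

definition vminus :: "nat \<Rightarrow> (nat \<Rightarrow> real) \<Rightarrow> (nat \<Rightarrow> nat \<Rightarrow> real^'m) \<Rightarrow> nat \<Rightarrow> real^'m" where
  "vminus k xs a r = pv k (a r) (xs (Suc r))"

definition vplus :: "nat \<Rightarrow> nat \<Rightarrow> (nat \<Rightarrow> real) \<Rightarrow> (nat \<Rightarrow> nat \<Rightarrow> real^'m) \<Rightarrow> nat \<Rightarrow> real^'m" where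
  "vplus k N xs a r = pv k (a (Suc r mod N)) (xs (Suc r mod N))"

definition avg :: "nat \<Rightarrow> nat \<Rightarrow> (nat \<Rightarrow> real) \<Rightarrow> (nat \<Rightarrow> nat \<Rightarrow> real^'m) \<Rightarrow> nat \<Rightarrow> real^'m" where
  "avg k N xs a r = (1/2) *\<^sub>R (vplus k N xs a r + vminus k xs a r)"

definition jump :: "nat \<Rightarrow> nat \<Rightarrow> (nat \<Rightarrow> real) \<Rightarrow> (nat \<Rightarrow> nat \<Rightarrow> real^'m) \<Rightarrow> nat \<Rightarrow> real^'m" where
  "jump k N xs a r = vplus k N xs a r - vminus k xs a r"

definition avgK :: "nat \<Rightarrow> nat \<Rightarrow> (nat \<Rightarrow> real) \<Rightarrow> real^'m^'m \<Rightarrow> (nat \<Rightarrow> nat \<Rightarrow> real^'m)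
    \<Rightarrow> (nat \<Rightarrow> nat \<Rightarrow> real^'m) \<Rightarrow> nat \<Rightarrow> real" where
  "avgK k N xs K a b r = (1/2) * ((K *v vplus k N xs a r) \<bullet> vplus k N xs b r
                                 + (K *v vminus k xs a r) \<bullet> vminus k xs b r)"

definition leftif :: "nat \<Rightarrow> nat \<Rightarrow> nat" where
  "leftif N j = (j + N - 1) mod N"

definition flux :: "nat \<Rightarrow> nat \<Rightarrow> (nat \<Rightarrow> real) \<Rightarrow> real^'m^'m \<Rightarrow> real^'m^'m \<Rightarrow> real^'m^'m
    \<Rightarrow> (real \<Rightarrow> nat \<Rightarrow> nat \<Rightarrow> real^'m) \<Rightarrow> real \<Rightarrow> nat \<Rightarrow> real^'m" where
  "flux k N xs K A B c t r =
     K *v avg k N xs (c t) r + A *v jump k N xs (c t) r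
     + B *v vector_derivative (\<lambda>s. jump k N xs (c s) r) (at t)"

definition dg_lhs :: "nat \<Rightarrow> nat \<Rightarrow> (nat \<Rightarrow> real) \<Rightarrow> real^'m^'m \<Rightarrow> real^'m^'m \<Rightarrow> real^'m^'m
    \<Rightarrow> real^'m^'m \<Rightarrow> (real \<Rightarrow> nat \<Rightarrow> nat \<Rightarrow> real^'m) \<Rightarrow> (nat \<Rightarrow> nat \<Rightarrow> real^'m)
    \<Rightarrow> real \<Rightarrow> nat \<Rightarrow> real" where
  "dg_lhs k N xs M K A B c phi t j =
     integral {xs j..xs (Suc j)}
       (\<lambda>x. (M *v vector_derivative (\<lambda>s. pv k (c s j) x) (at t)) \<bullet> pv k (phi j) x)
   - integral {xs j..xs (Suc j)}
       (\<lambda>x. (K *v pv k (c t j) x) \<bullet> vector_derivative (\<lambda>y. pv k (phi j) y) (at x))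
   + flux k N xs K A B c t j \<bullet> vminus k xs phi j
   - flux k N xs K A B c t (leftif N j) \<bullet> vplus k N xs phi (leftif N j)"

definition omega :: "nat \<Rightarrow> nat \<Rightarrow> (nat \<Rightarrow> real) \<Rightarrow> real^'m^'m \<Rightarrow> real^'m^'m
    \<Rightarrow> (real \<Rightarrow> nat \<Rightarrow> nat \<Rightarrow> real^'m) \<Rightarrow> (real \<Rightarrow> nat \<Rightarrow> nat \<Rightarrow> real^'m) \<Rightarrow> real \<Rightarrow> nat \<Rightarrow> real" where
  "omega k N xs M B c d t j =
     integral {xs j..xs (Suc j)} (\<lambda>x. (M *v pv k (c t j) x) \<bullet> pv k (d t j) x)
   + (1/2) * ((B *v jump k N xs (d t) j) \<bullet> jump k N xs (c t) j)
   + (1/2) * ((B *v jump k N xs (d t) (leftif N j)) \<bullet> jump k N xs (c t) (leftif N j))"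

definition Fcal :: "nat \<Rightarrow> nat \<Rightarrow> (nat \<Rightarrow> real) \<Rightarrow> real^'m^'m \<Rightarrow> real^'m^'m \<Rightarrow> real^'m^'m
    \<Rightarrow> (real \<Rightarrow> nat \<Rightarrow> nat \<Rightarrow> real^'m) \<Rightarrow> (real \<Rightarrow> nat \<Rightarrow> nat \<Rightarrow> real^'m) \<Rightarrow> real \<Rightarrow> nat \<Rightarrow> real" where
  "Fcal k N xs K A B c d t r =
     avgK k N xs K (c t) (d t) r
   - flux k N xs K A B c t r \<bullet> avg k N xs (d t) r
   + flux k N xs K A B d t r \<bullet> avg k N xs (c t) r"

end

theory Submission
  imports Defs
begin

(* Test the linearised scheme for the variation u with the other variation v, and the one for v
   with u, and subtract. The Hessian terms cancel because mixed partial derivatives of the smooth S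
   commute; skew-symmetry of M turns the mass terms into the time derivative of the volume part of
   omega; skew-symmetry of K and integration by parts turn the stiffness terms into point values at
   the cell ends. At each interface the boundary terms contributed by the two adjacent cells are the
   two one-sided versions of the flux F, and since K is skew, A symmetric and B skew, they differ
   from F by plus and minus half the time derivative of B[v].[u], the interface part of omega. *)

lemma matrix_vector_mult_inner_transpose:
  fixes K :: "real^'n^'m"
  shows "(K *v a) \<bullet> b = (transpose K *v b) \<bullet> a"
  by (metis dot_lmul_matrix inner_commute vector_transpose_matrix)

lemma skew_matrix_inner:
  fixes K :: "real^'m^'m"
  assumes "transpose K = - K"
  shows "(K *v a) \<bullet> b = - ((K *v b) \<bullet> a)"
proof -
  have "(- K) *v b = - (K *v b)"
    by (simp add: vec_eq_iff matrix_vector_mult_def sum_negf)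
  then show ?thesis
    using matrix_vector_mult_inner_transpose[of K a b] assms by simp
qed

lemma symmetric_matrix_inner:
  fixes A :: "real^'m^'m"
  assumes "transpose A = A"
  shows "(A *v a) \<bullet> b = (A *v b) \<bullet> a"
  using matrix_vector_mult_inner_transpose[of A a b] assms by simp

lemma has_real_derivative_matrix_inner:
  fixes M :: "real^'n^'m" and f :: "real \<Rightarrow> real^'n" and g :: "real \<Rightarrow> real^'m"
  assumes f: "(f has_vector_derivative f') (at t within S)"
    and g: "(g has_vector_derivative g') (at t within S)"
  shows "((\<lambda>s. (M *v f s) \<bullet> g s) has_real_derivative (M *v f') \<bullet> g t + (M *v f t) \<bullet> g')
           (at t within S)"
proof -
  have Mf: "((\<lambda>s. M *v f s) has_derivative (\<lambda>h. M *v (h *\<^sub>R f'))) (at t within S)"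
    using bounded_linear.has_derivative[OF matrix_vector_mul_bounded_linear
        f[unfolded has_vector_derivative_def]] .
  have "((\<lambda>s. (M *v f s) \<bullet> g s) has_derivative
      (\<lambda>h. (M *v f t) \<bullet> (h *\<^sub>R g') + (M *v (h *\<^sub>R f')) \<bullet> g t)) (at t within S)"
    using has_derivative_inner[OF Mf g[unfolded has_vector_derivative_def]] .
  then show ?thesis
    unfolding has_field_derivative_def
    by (rule has_derivative_eq_rhs) (auto simp: fun_eq_iff algebra_simps)
qed

section \<open>Symmetry of the Hessian\<close>

lemma has_real_derivative_along_line:
  fixes f :: "'a::real_normed_vector \<Rightarrow> real"
  assumes "f differentiable (at (w + s0 *\<^sub>R v))"
  shows "((\<lambda>s. f (w + s *\<^sub>R v)) has_real_derivative frechet_derivative f (at (w + s0 *\<^sub>R v)) v)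
           (at s0)"
proof -
  let ?F = "frechet_derivative f (at (w + s0 *\<^sub>R v))"
  have f: "(f has_derivative ?F) (at (w + s0 *\<^sub>R v))"
    using assms frechet_derivative_works by blast
  have "((\<lambda>s. w + s *\<^sub>R v) has_derivative (\<lambda>h. h *\<^sub>R v)) (at s0)"
    by (auto intro!: derivative_eq_intros)
  from has_derivative_compose[OF this f]
  have "((\<lambda>s. f (w + s *\<^sub>R v)) has_derivative (\<lambda>h. ?F (h *\<^sub>R v))) (at s0)" .
  moreover have "(\<lambda>h. ?F (h *\<^sub>R v)) = (*) (?F v)"
    using has_derivative_linear[OF f] by (auto simp: linear_scale mult.commute)
  ultimately show ?thesis
    unfolding has_field_derivative_def by simp
qed

lemma pdiff_has_real_derivative:
  fixes f :: "real^'m \<Rightarrow> real"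
  assumes "\<And>y. f differentiable (at y)"
  shows "((\<lambda>s. f (w + s *\<^sub>R axis i 1)) has_real_derivative pdiff f i (w + s0 *\<^sub>R axis i 1))
           (at s0)"
proof -
  let ?y = "w + s0 *\<^sub>R axis i 1"
  have "pdiff f i ?y = frechet_derivative f (at ?y) (axis i 1)"
    using has_real_derivative_along_line[of f ?y 0 "axis i 1"] assms
    unfolding pdiff_def by (simp add: DERIV_imp_deriv)
  then show ?thesis
    using has_real_derivative_along_line[of f w s0 "axis i 1"] assms by simp
qed

lemma mixed_difference_mean_value:
  fixes f :: "real^'m \<Rightarrow> real"
  assumes f: "\<And>y. f differentiable (at y)" and fi: "\<And>y. pdiff f i differentiable (at y)"
    and h: "h > 0"
  obtains a b where "0 < a" "a < h" "0 < b" "b < h"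
    "f (z + h *\<^sub>R axis i 1 + h *\<^sub>R axis j 1) - f (z + h *\<^sub>R axis i 1)
       - f (z + h *\<^sub>R axis j 1) + f z
     = h * h * pdiff (pdiff f i) j (z + a *\<^sub>R axis i 1 + b *\<^sub>R axis j 1)"
proof -
  let ?ei = "axis i 1 :: real^'m" and ?ej = "axis j 1 :: real^'m"
  define \<phi> where "\<phi> s = f ((z + h *\<^sub>R ?ej) + s *\<^sub>R ?ei) - f (z + s *\<^sub>R ?ei)" for s
  have "\<And>s. 0 \<le> s \<Longrightarrow> s \<le> h \<Longrightarrow> DERIV \<phi> s :>
      pdiff f i ((z + h *\<^sub>R ?ej) + s *\<^sub>R ?ei) - pdiff f i (z + s *\<^sub>R ?ei)"
    unfolding \<phi>_def by (intro DERIV_diff pdiff_has_real_derivative f)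
  from MVT2[OF h this] obtain a where a: "0 < a" "a < h"
    and \<phi>_diff: "\<phi> h - \<phi> 0
      = h * (pdiff f i ((z + h *\<^sub>R ?ej) + a *\<^sub>R ?ei) - pdiff f i (z + a *\<^sub>R ?ei))"
    by auto
  define \<psi> where "\<psi> s = pdiff f i ((z + a *\<^sub>R ?ei) + s *\<^sub>R ?ej)" for s
  have "\<And>s. 0 \<le> s \<Longrightarrow> s \<le> h \<Longrightarrow>
      DERIV \<psi> s :> pdiff (pdiff f i) j ((z + a *\<^sub>R ?ei) + s *\<^sub>R ?ej)"
    unfolding \<psi>_def by (intro pdiff_has_real_derivative fi)
  from MVT2[OF h this] obtain b where b: "0 < b" "b < h"
    and \<psi>_diff: "\<psi> h - \<psi> 0 = h * pdiff (pdiff f i) j ((z + a *\<^sub>R ?ei) + b *\<^sub>R ?ej)"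
    by auto
  have "f (z + h *\<^sub>R ?ei + h *\<^sub>R ?ej) - f (z + h *\<^sub>R ?ei) - f (z + h *\<^sub>R ?ej) + f z
      = \<phi> h - \<phi> 0"
    unfolding \<phi>_def by (simp add: algebra_simps)
  also have "\<dots> = h * (\<psi> h - \<psi> 0)"
    using \<phi>_diff unfolding \<psi>_def by (simp add: algebra_simps)
  also have "\<dots> = h * h * pdiff (pdiff f i) j (z + a *\<^sub>R ?ei + b *\<^sub>R ?ej)"
    using \<psi>_diff by simp
  finally show ?thesis
    using a b that by blast
qed

lemma smooth_fun_differentiable:
  assumes "smooth_fun f"
  shows "f differentiable (at y)" and "pdiff f i differentiable (at y)"
    and "pdiff (pdiff f i) j differentiable (at y)"
  using assms unfolding smooth_fun_def by (metis iter_pdiff.simps)+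

lemma pdiff_pdiff_commute:
  fixes f :: "real^'m \<Rightarrow> real"
  assumes f: "smooth_fun f"
  shows "pdiff (pdiff f i) j z = pdiff (pdiff f j) i z"
proof (rule ccontr)
  let ?ei = "axis i 1 :: real^'m" and ?ej = "axis j 1 :: real^'m"
  let ?fij = "pdiff (pdiff f i) j" and ?fji = "pdiff (pdiff f j) i"
  assume ne: "?fij z \<noteq> ?fji z"
  define e where "e = \<bar>?fij z - ?fji z\<bar> / 3"
  have "e > 0"
    using ne unfolding e_def by simp
  moreover have "continuous (at z) ?fij" "continuous (at z) ?fji"
    using smooth_fun_differentiable(3)[OF f] differentiable_imp_continuous_within by blast+
  ultimately obtain d1 d2 where "d1 > 0" "d2 > 0"
    and d1: "\<And>y. dist y z < d1 \<Longrightarrow> dist (?fij y) (?fij z) < e"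
    and d2: "\<And>y. dist y z < d2 \<Longrightarrow> dist (?fji y) (?fji z) < e"
    unfolding continuous_at_eps_delta by metis
  define h where "h = min d1 d2 / 3"
  have h: "h > 0"
    using \<open>d1 > 0\<close> \<open>d2 > 0\<close> unfolding h_def by simp
  have near: "dist (z + a *\<^sub>R axis p 1 + b *\<^sub>R axis q 1) z < min d1 d2"
    if "0 < a" "a < h" "0 < b" "b < h" for a b and p q :: 'm
  proof -
    have "dist (z + a *\<^sub>R axis p 1 + b *\<^sub>R axis q 1) z
        = norm (a *\<^sub>R axis p (1::real) + b *\<^sub>R axis q 1)"
      by (simp add: dist_norm)
    also have "\<dots> \<le> norm (a *\<^sub>R axis p (1::real)) + norm (b *\<^sub>R axis q (1::real))"
      by (rule norm_triangle_ineq)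
    also have "\<dots> = a + b"
      using that by simp
    finally show ?thesis
      using that unfolding h_def by linarith
  qed
  \<comment> \<open>the same mixed second difference, expanded in the two orders\<close>
  obtain a b where ab: "0 < a" "a < h" "0 < b" "b < h" and E1:
    "f (z + h *\<^sub>R ?ei + h *\<^sub>R ?ej) - f (z + h *\<^sub>R ?ei) - f (z + h *\<^sub>R ?ej) + f z
     = h * h * ?fij (z + a *\<^sub>R ?ei + b *\<^sub>R ?ej)"
    using mixed_difference_mean_value[OF smooth_fun_differentiable(1,2)[OF f] h] by blast
  obtain a' b' where ab': "0 < a'" "a' < h" "0 < b'" "b' < h" and E2:
    "f (z + h *\<^sub>R ?ej + h *\<^sub>R ?ei) - f (z + h *\<^sub>R ?ej) - f (z + h *\<^sub>R ?ei) + f z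
     = h * h * ?fji (z + a' *\<^sub>R ?ej + b' *\<^sub>R ?ei)"
    using mixed_difference_mean_value[OF smooth_fun_differentiable(1,2)[OF f] h] by blast
  have swap: "z + h *\<^sub>R ?ej + h *\<^sub>R ?ei = z + h *\<^sub>R ?ei + h *\<^sub>R ?ej"
    by (simp add: algebra_simps)
  have "h * h * ?fij (z + a *\<^sub>R ?ei + b *\<^sub>R ?ej)
      = h * h * ?fji (z + a' *\<^sub>R ?ej + b' *\<^sub>R ?ei)"
    using E1 E2 unfolding swap by linarith
  then have "?fij (z + a *\<^sub>R ?ei + b *\<^sub>R ?ej) = ?fji (z + a' *\<^sub>R ?ej + b' *\<^sub>R ?ei)"
    using h by simp
  moreover have "dist (?fij (z + a *\<^sub>R ?ei + b *\<^sub>R ?ej)) (?fij z) < e"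
    using d1 near[OF ab] by simp
  moreover have "dist (?fji (z + a' *\<^sub>R ?ej + b' *\<^sub>R ?ei)) (?fji z) < e"
    using d2 near[OF ab'] by simp
  ultimately have "\<bar>?fij z - ?fji z\<bar> < 2 * e"
    unfolding dist_real_def by linarith
  then show False
    unfolding e_def using ne by simp
qed

lemma hess_symmetric:
  assumes "smooth_fun S"
  shows "transpose (hess S z) = hess S z"
  unfolding transpose_def hess_def using pdiff_pdiff_commute[OF assms] by (simp add: vec_eq_iff)

section \<open>Calculus of cellwise polynomials\<close>

(* At n = 0 the truncated exponent n - 1 is harmless: its coefficient real n vanishes. *)
definition pv_deriv :: "nat \<Rightarrow> (nat \<Rightarrow> real^'m) \<Rightarrow> real \<Rightarrow> real^'m" where
  "pv_deriv k a x = (\<Sum>n\<le>k. (real n * x ^ (n - 1)) *\<^sub>R a n)"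

lemma pv_has_vector_derivative:
  "((\<lambda>y. pv k a y) has_vector_derivative pv_deriv k a x) (at x within S)"
  unfolding pv_def pv_deriv_def
  by (intro has_vector_derivative_sum has_vector_derivative_scaleR[where g'=0, simplified]
      DERIV_pow[folded One_nat_def] derivative_intros)

lemma vector_derivative_pv: "vector_derivative (\<lambda>y. pv k a y) (at x) = pv_deriv k a x"
  using pv_has_vector_derivative vector_derivative_at by blast

lemma continuous_on_pv [continuous_intros]: "continuous_on S (\<lambda>x. pv k a x)"
  unfolding pv_def by (intro continuous_intros)

lemma continuous_on_pv_deriv [continuous_intros]: "continuous_on S (\<lambda>x. pv_deriv k a x)"
  unfolding pv_deriv_def by (intro continuous_intros)

lemma pv_has_vector_derivative_coeffs:
  assumes "\<And>n. ((\<lambda>s. c s n) has_vector_derivative c' n) (at t)"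
  shows "((\<lambda>s. pv k (c s) x) has_vector_derivative pv k c' x) (at t)"
  unfolding pv_def
  by (intro has_vector_derivative_sum has_vector_derivative_scaleR[where f'=0, simplified]
      assms derivative_intros)

lemma integral_matrix_inner_pv_by_parts:
  fixes K :: "real^'m^'m"
  assumes "a \<le> b"
  shows "integral {a..b} (\<lambda>x. (K *v pv k p x) \<bullet> pv_deriv k q x)
       + integral {a..b} (\<lambda>x. (K *v pv_deriv k p x) \<bullet> pv k q x)
       = (K *v pv k p b) \<bullet> pv k q b - (K *v pv k p a) \<bullet> pv k q a"
proof -
  have "((\<lambda>x. (K *v pv k p x) \<bullet> pv_deriv k q x + (K *v pv_deriv k p x) \<bullet> pv k q x) has_integral
      (K *v pv k p b) \<bullet> pv k q b - (K *v pv k p a) \<bullet> pv k q a) {a..b}"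
  proof (rule fundamental_theorem_of_calculus[OF assms])
    fix x
    have "((\<lambda>x. (K *v pv k p x) \<bullet> pv k q x) has_real_derivative
        (K *v pv_deriv k p x) \<bullet> pv k q x + (K *v pv k p x) \<bullet> pv_deriv k q x) (at x within {a..b})"
      by (rule has_real_derivative_matrix_inner[OF pv_has_vector_derivative pv_has_vector_derivative])
    then show "((\<lambda>x. (K *v pv k p x) \<bullet> pv k q x) has_vector_derivative
        (K *v pv k p x) \<bullet> pv_deriv k q x + (K *v pv_deriv k p x) \<bullet> pv k q x) (at x within {a..b})"
      by (simp add: has_real_derivative_iff_has_vector_derivative add.commute)
  qed
  moreover have "(\<lambda>x. (K *v pv k p x) \<bullet> pv_deriv k q x) integrable_on {a..b}"
    and "(\<lambda>x. (K *v pv_deriv k p x) \<bullet> pv k q x) integrable_on {a..b}"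
    by (intro integrable_continuous_interval continuous_on_inner continuous_on_pv
        continuous_on_pv_deriv bounded_linear.continuous_on[OF matrix_vector_mul_bounded_linear])+
  ultimately show ?thesis
    by (simp add: integral_add[symmetric] integral_unique)
qed

lemma integral_matrix_inner_pv:
  fixes M :: "real^'m^'m"
  shows "integral {a..b} (\<lambda>x. (M *v pv k p x) \<bullet> pv k q x)
    = (\<Sum>n\<le>k. \<Sum>m\<le>k. integral {a..b} (\<lambda>x. x ^ (n + m)) * ((M *v p n) \<bullet> q m))"
proof -
  have "(M *v pv k p x) \<bullet> pv k q x = (\<Sum>n\<le>k. \<Sum>m\<le>k. x ^ (n + m) * ((M *v p n) \<bullet> q m))" for x
    unfolding pv_def linear_sum[OF matrix_vector_mul_linear] inner_sum_left inner_sum_right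
    by (simp add: o_def matrix_vector_mult_scaleR power_add mult_ac) (subst sum.swap, simp add: mult_ac)
  moreover have "(\<lambda>x. x ^ (n + m) * C) integrable_on {a..b}" for n m and C :: real
    by (intro integrable_continuous_interval continuous_intros)
  ultimately show ?thesis
    by (simp add: integral_sum integrable_sum)
qed

lemma integral_matrix_inner_pv_has_real_derivative:
  fixes M :: "real^'m^'m"
  assumes "\<And>n. ((\<lambda>s. p s n) has_vector_derivative p' n) (at t)"
    and "\<And>n. ((\<lambda>s. q s n) has_vector_derivative q' n) (at t)"
  shows "((\<lambda>s. integral {a..b} (\<lambda>x. (M *v pv k (p s) x) \<bullet> pv k (q s) x)) has_real_derivative
      integral {a..b} (\<lambda>x. (M *v pv k p' x) \<bullet> pv k (q t) x)
    + integral {a..b} (\<lambda>x. (M *v pv k (p t) x) \<bullet> pv k q' x)) (at t)"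
  unfolding integral_matrix_inner_pv sum.distrib[symmetric] distrib_left[symmetric]
  by (intro DERIV_sum DERIV_cmult has_real_derivative_matrix_inner assms)

section \<open>The DG quantities along time dependent coefficients\<close>

lemma C1_differentiable_on_has_vector_derivative:
  assumes "f C1_differentiable_on T" and "t \<in> T"
  shows "(f has_vector_derivative vector_derivative f (at t)) (at t)"
proof -
  have "f differentiable (at t)"
    using assms unfolding C1_differentiable_on_eq by blast
  then show ?thesis
    unfolding vector_derivative_works .
qed

lemma leftif_Suc_mod:
  assumes "j < N"
  shows "Suc (leftif N j) mod N = j"
proof -
  have "Suc (leftif N j) mod N = Suc (j + N - 1) mod N"
    unfolding leftif_def by (simp add: mod_Suc_eq)
  also have "Suc (j + N - 1) = j + N"
    using assms by simp
  finally show ?thesis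
    using assms by simp
qed

lemma vplus_leftif: "j < N \<Longrightarrow> vplus k N xs a (leftif N j) = pv k (a j) (xs j)"
  unfolding vplus_def by (simp add: leftif_Suc_mod)

lemma jump_has_vector_derivative:
  assumes "\<And>i n. ((\<lambda>s. c s i n) has_vector_derivative c' i n) (at t)"
  shows "((\<lambda>s. jump k N xs (c s) r) has_vector_derivative jump k N xs c' r) (at t)"
  unfolding jump_def vplus_def vminus_def
  by (intro has_vector_derivative_diff pv_has_vector_derivative_coeffs assms)

lemma flux_eq:
  assumes "\<And>i n. ((\<lambda>s. c s i n) has_vector_derivative c' i n) (at t)"
  shows "flux k N xs K A B c t r
    = K *v avg k N xs (c t) r + A *v jump k N xs (c t) r + B *v jump k N xs c' r"
  unfolding flux_def vector_derivative_at[OF jump_has_vector_derivative[OF assms]] ..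

lemma dg_lhs_eq:
  assumes "\<And>i n. ((\<lambda>s. c s i n) has_vector_derivative c' i n) (at t)" and "j < N"
  shows "dg_lhs k N xs M K A B c phi t j
    = integral {xs j..xs (Suc j)} (\<lambda>x. (M *v pv k (c' j) x) \<bullet> pv k (phi j) x)
    - integral {xs j..xs (Suc j)} (\<lambda>x. (K *v pv k (c t j) x) \<bullet> pv_deriv k (phi j) x)
    + flux k N xs K A B c t j \<bullet> pv k (phi j) (xs (Suc j))
    - flux k N xs K A B c t (leftif N j) \<bullet> pv k (phi j) (xs j)"
proof -
  have "vector_derivative (\<lambda>s. pv k (c s j) x) (at t) = pv k (c' j) x" for x
    using pv_has_vector_derivative_coeffs[where c="\<lambda>s. c s j", OF assms(1)] vector_derivative_at
    by blast
  then show ?thesis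
    unfolding dg_lhs_def by (simp add: vector_derivative_pv vminus_def vplus_leftif[OF \<open>j < N\<close>])
qed

text \<open>The flux F with the interface averages replaced by the one-sided traces u, v.\<close>

definition one_sided_flux ::
    "real^'m^'m \<Rightarrow> real^'m \<Rightarrow> real^'m \<Rightarrow> real^'m \<Rightarrow> real^'m \<Rightarrow> real" where
  "one_sided_flux K hu hv u v = (K *v u) \<bullet> v - hu \<bullet> v + hv \<bullet> u"

lemma interface_flux_identity:
  fixes K A B :: "real^'m^'m" and up um vp vm du dv :: "real^'m"
  assumes K: "transpose K = - K" and A: "transpose A = A" and B: "transpose B = - B"
  defines "hu \<equiv> K *v ((1/2) *\<^sub>R (up + um)) + A *v (up - um) + B *v du"
    and "hv \<equiv> K *v ((1/2) *\<^sub>R (vp + vm)) + A *v (vp - vm) + B *v dv"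
    and "\<beta> \<equiv> (B *v dv) \<bullet> (up - um) + (B *v (vp - vm)) \<bullet> du"
  defines "F \<equiv> (1/2) * ((K *v up) \<bullet> vp + (K *v um) \<bullet> vm)
      - hu \<bullet> ((1/2) *\<^sub>R (vp + vm)) + hv \<bullet> ((1/2) *\<^sub>R (up + um))"
  shows "F = one_sided_flux K hu hv um vm + \<beta> / 2"
    and "F = one_sided_flux K hu hv up vp - \<beta> / 2"
proof -
  have "(K *v vp) \<bullet> up = - ((K *v up) \<bullet> vp)" "(K *v vp) \<bullet> um = - ((K *v um) \<bullet> vp)"
    "(K *v vm) \<bullet> up = - ((K *v up) \<bullet> vm)" "(K *v vm) \<bullet> um = - ((K *v um) \<bullet> vm)"
    "(A *v vp) \<bullet> up = (A *v up) \<bullet> vp" "(A *v vp) \<bullet> um = (A *v um) \<bullet> vp"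
    "(A *v vm) \<bullet> up = (A *v up) \<bullet> vm" "(A *v vm) \<bullet> um = (A *v um) \<bullet> vm"
    "(B *v vp) \<bullet> du = - ((B *v du) \<bullet> vp)" "(B *v vm) \<bullet> du = - ((B *v du) \<bullet> vm)"
    using skew_matrix_inner[OF K] symmetric_matrix_inner[OF A] skew_matrix_inner[OF B] by blast+
  then show "F = one_sided_flux K hu hv um vm + \<beta> / 2" "F = one_sided_flux K hu hv up vp - \<beta> / 2"
    unfolding F_def hu_def hv_def \<beta>_def one_sided_flux_def
    by (simp_all add: algebra_simps inner_add_left inner_add_right inner_diff_left
        inner_diff_right) (simp_all add: field_simps)
qed

lemma Fcal_eq_one_sided_flux:
  fixes K A B :: "real^'m^'m" and k N r :: nat and xs :: "nat \<Rightarrow> real"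
  assumes K: "transpose K = - K" and A: "transpose A = A" and B: "transpose B = - B"
    and c': "\<And>i n. ((\<lambda>s. c s i n) has_vector_derivative c' i n) (at t)"
    and d': "\<And>i n. ((\<lambda>s. d s i n) has_vector_derivative d' i n) (at t)"
  defines "\<beta> \<equiv> (B *v jump k N xs d' r) \<bullet> jump k N xs (c t) r
      + (B *v jump k N xs (d t) r) \<bullet> jump k N xs c' r"
  shows "Fcal k N xs K A B c d t r = one_sided_flux K (flux k N xs K A B c t r)
      (flux k N xs K A B d t r) (vminus k xs (c t) r) (vminus k xs (d t) r) + \<beta> / 2"
    and "Fcal k N xs K A B c d t r = one_sided_flux K (flux k N xs K A B c t r)
      (flux k N xs K A B d t r) (vplus k N xs (c t) r) (vplus k N xs (d t) r) - \<beta> / 2"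
  using interface_flux_identity[OF K A B, where up="vplus k N xs (c t) r" and um="vminus k xs (c t) r"
      and du="jump k N xs c' r" and vp="vplus k N xs (d t) r" and vm="vminus k xs (d t) r"
      and dv="jump k N xs d' r"]
  unfolding \<beta>_def Fcal_def avgK_def flux_eq[OF c'] flux_eq[OF d'] avg_def jump_def
  by simp_all

lemma omega_has_real_derivative:
  fixes M B :: "real^'m^'m" and k N :: nat and xs :: "nat \<Rightarrow> real"
  assumes c': "\<And>i n. ((\<lambda>s. c s i n) has_vector_derivative c' i n) (at t)"
    and d': "\<And>i n. ((\<lambda>s. d s i n) has_vector_derivative d' i n) (at t)"
  defines "\<beta> r \<equiv> (B *v jump k N xs d' r) \<bullet> jump k N xs (c t) r
      + (B *v jump k N xs (d t) r) \<bullet> jump k N xs c' r"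
  shows "((\<lambda>s. omega k N xs M B c d s j) has_real_derivative
      integral {xs j..xs (Suc j)} (\<lambda>x. (M *v pv k (c' j) x) \<bullet> pv k (d t j) x)
    + integral {xs j..xs (Suc j)} (\<lambda>x. (M *v pv k (c t j) x) \<bullet> pv k (d' j) x)
    + \<beta> j / 2 + \<beta> (leftif N j) / 2) (at t)"
  unfolding omega_def \<beta>_def
  by (rule DERIV_cong, (rule DERIV_add DERIV_cmult integral_matrix_inner_pv_has_real_derivative
      has_real_derivative_matrix_inner jump_has_vector_derivative c' d')+) simp

lemma dg_cell_balance:
  fixes M K A B :: "real^'m^'m" and H :: "real \<Rightarrow> real^'m^'m"
  assumes M: "transpose M = - M" and K: "transpose K = - K"
    and H: "\<And>x. transpose (H x) = H x"
    and c': "\<And>i n. ((\<lambda>s. c s i n) has_vector_derivative c' i n) (at t)"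
    and d': "\<And>i n. ((\<lambda>s. d s i n) has_vector_derivative d' i n) (at t)"
    and j: "j < N" and mesh: "xs j \<le> xs (Suc j)"
    and c_eq: "dg_lhs k N xs M K A B c (d t) t j
      = integral {xs j..xs (Suc j)} (\<lambda>x. (H x *v pv k (c t j) x) \<bullet> pv k (d t j) x)"
    and d_eq: "dg_lhs k N xs M K A B d (c t) t j
      = integral {xs j..xs (Suc j)} (\<lambda>x. (H x *v pv k (d t j) x) \<bullet> pv k (c t j) x)"
  shows "integral {xs j..xs (Suc j)} (\<lambda>x. (M *v pv k (c' j) x) \<bullet> pv k (d t j) x)
      + integral {xs j..xs (Suc j)} (\<lambda>x. (M *v pv k (c t j) x) \<bullet> pv k (d' j) x)
    = one_sided_flux K (flux k N xs K A B c t j) (flux k N xs K A B d t j)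
        (vminus k xs (c t) j) (vminus k xs (d t) j)
    - one_sided_flux K (flux k N xs K A B c t (leftif N j)) (flux k N xs K A B d t (leftif N j))
        (vplus k N xs (c t) (leftif N j)) (vplus k N xs (d t) (leftif N j))"
proof -
  let ?I = "integral {xs j..xs (Suc j)}"
  have hess_swap: "?I (\<lambda>x. (H x *v pv k (c t j) x) \<bullet> pv k (d t j) x)
      = ?I (\<lambda>x. (H x *v pv k (d t j) x) \<bullet> pv k (c t j) x)"
    by (rule arg_cong[where f="?I"], rule ext, rule symmetric_matrix_inner[OF H])
  have "?I (\<lambda>x. (K *v pv k (d t j) x) \<bullet> pv_deriv k (c t j) x)
      = ?I (\<lambda>x. - ((K *v pv_deriv k (c t j) x) \<bullet> pv k (d t j) x))"
    by (rule arg_cong[where f="?I"], rule ext, rule skew_matrix_inner[OF K])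
  then have K_swap: "?I (\<lambda>x. (K *v pv k (d t j) x) \<bullet> pv_deriv k (c t j) x)
      = - ?I (\<lambda>x. (K *v pv_deriv k (c t j) x) \<bullet> pv k (d t j) x)"
    by (simp only: integral_neg)
  have "?I (\<lambda>x. (M *v pv k (c t j) x) \<bullet> pv k (d' j) x)
      = ?I (\<lambda>x. - ((M *v pv k (d' j) x) \<bullet> pv k (c t j) x))"
    by (rule arg_cong[where f="?I"], rule ext, rule skew_matrix_inner[OF M])
  then have M_swap: "?I (\<lambda>x. (M *v pv k (c t j) x) \<bullet> pv k (d' j) x)
      = - ?I (\<lambda>x. (M *v pv k (d' j) x) \<bullet> pv k (c t j) x)"
    by (simp only: integral_neg)
  show ?thesis
    using c_eq d_eq hess_swap K_swap M_swap
      integral_matrix_inner_pv_by_parts[OF mesh, of K k "c t j" "d t j"]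
    unfolding dg_lhs_eq[OF c' j] dg_lhs_eq[OF d' j] one_sided_flux_def vminus_def vplus_leftif[OF j]
    by linarith
qed

theorem theorem3p1:
  fixes M K A B :: "real^'m^'m" and S :: "real^'m \<Rightarrow> real"
    and N k :: nat and xs :: "nat \<Rightarrow> real" and T :: "real set"
    and zc dc db :: "real \<Rightarrow> nat \<Rightarrow> nat \<Rightarrow> real^'m"
  assumes M_anti: "transpose M = - M" and K_anti: "transpose K = - K"
    and A_sym: "transpose A = A" and B_anti: "transpose B = - B"
    and S_smooth: "smooth_fun S"
    and N_pos: "N \<ge> 1" and mesh: "\<forall>j<N. xs j < xs (Suc j)"
    and T_open: "open T"
    and zc_C1: "\<forall>j n. (\<lambda>t. zc t j n) C1_differentiable_on T"
    and dc_C1: "\<forall>j n. (\<lambda>t. dc t j n) C1_differentiable_on T"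
    and db_C1: "\<forall>j n. (\<lambda>t. db t j n) C1_differentiable_on T"
    and zh_scheme: "\<forall>t\<in>T. \<forall>j<N. \<forall>phi.
        dg_lhs k N xs M K A B zc phi t j
        = integral {xs j..xs (Suc j)} (\<lambda>x. grad S (pv k (zc t j) x) \<bullet> pv k (phi j) x)"
    and dc_eq: "\<forall>t\<in>T. \<forall>j<N. \<forall>phi.
        dg_lhs k N xs M K A B dc phi t j
        = integral {xs j..xs (Suc j)}
            (\<lambda>x. (hess S (pv k (zc t j) x) *v pv k (dc t j) x) \<bullet> pv k (phi j) x)"
    and db_eq: "\<forall>t\<in>T. \<forall>j<N. \<forall>phi.
        dg_lhs k N xs M K A B db phi t j
        = integral {xs j..xs (Suc j)}
            (\<lambda>x. (hess S (pv k (zc t j) x) *v pv k (db t j) x) \<bullet> pv k (phi j) x)"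
  shows "\<forall>t\<in>T. \<forall>j<N.
    ((\<lambda>s. omega k N xs M B dc db s j) has_real_derivative
       (Fcal k N xs K A B dc db t j - Fcal k N xs K A B dc db t (leftif N j))) (at t)"
proof (intro ballI allI impI)
  fix t j
  assume t: "t \<in> T" and j: "j < N"
  define dc' where "dc' i n = vector_derivative (\<lambda>s. dc s i n) (at t)" for i n
  define db' where "db' i n = vector_derivative (\<lambda>s. db s i n) (at t)" for i n
  have dc': "((\<lambda>s. dc s i n) has_vector_derivative dc' i n) (at t)" for i n
    unfolding dc'_def using dc_C1 t by (blast intro: C1_differentiable_on_has_vector_derivative)
  have db': "((\<lambda>s. db s i n) has_vector_derivative db' i n) (at t)" for i n
    unfolding db'_def using db_C1 t by (blast intro: C1_differentiable_on_has_vector_derivative)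
  have "xs j \<le> xs (Suc j)"
    using mesh j by (simp add: less_imp_le)
  note balance = dg_cell_balance[where H="\<lambda>x. hess S (pv k (zc t j) x)",
      OF M_anti K_anti hess_symmetric[OF S_smooth] dc' db' j this
      dc_eq[rule_format, OF t j] db_eq[rule_format, OF t j]]
  note flux_right = Fcal_eq_one_sided_flux(1)[where c=dc and d=db and k=k and N=N and xs=xs
      and r=j, OF K_anti A_sym B_anti dc' db']
  note flux_left = Fcal_eq_one_sided_flux(2)[where c=dc and d=db and k=k and N=N and xs=xs
      and r="leftif N j", OF K_anti A_sym B_anti dc' db']
  show "((\<lambda>s. omega k N xs M B dc db s j) has_real_derivative
      Fcal k N xs K A B dc db t j - Fcal k N xs K A B dc db t (leftif N j)) (at t)"
    by (rule DERIV_cong[OF omega_has_real_derivative[where c=dc and d=db, OF dc' db']])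
      (use balance flux_right flux_left in linarith)
qed

end
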